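(* Let $\Omega\subset\mathbb{R}^2$ be a bounded domain and $h>0$, with the discrete setting described in the context. For a discrete triple $(\vec U^*,\vec v^*,\omega^* )$ with $\vec U^*=(U^*_x,U^*_y)$ a grid vector field on the edges, $\vec v^*\in\mathbb{R}^2$, $\omega^*\in\mathbb{R}$, define the discrete kinetic energy \[ E_h(\vec U^*,\vec v^*,\omega^* )=\tfrac12\sum_{i,j}\big((\rho H(U_x^* )^2)_{i+1/2,j}+(\rho H(U_y^* )^2)_{i,j+1/2}\big)h^2+\tfrac12m|\vec v^*|^2+\tfrac12\omega^*\mathbb{I}\omega^*. \] Let $p\in\{1_{\Omega^h}\}^\perp$ be the solution of $L^hp=-\operatorname{D}(H\vec U^* )+\vec v^*\cdot\operatorname{G}H+\omega^*\vec J^h$ in $\Omega^h$, and let \[ (\vec U,\vec v,\omega)=(\vec U^*,\vec v^*,\omega^* )-\Big(\tfrac1\rho\operatorname{G}p,\;\tfrac1m\sum_{k,l}(p\operatorname{G}H)_{kl}h^2,\;\mathbb{I}^{-1}\sum_{k,l}(p\vec J^h)_{kl}h^2\Big). \] Then $E_h(\vec U^*,\vec v^*,\omega^* )\ge E_h(\vec U,\vec v,\omega)$.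
   Context: Grid: $x_i=ih$, $y_j=jh$, $x_{i\pm1/2}=(i\pm\frac12)h$; $C_{ij}=[x_{i-1/2},x_{i+1/2}]\times[y_{j-1/2},y_{j+1/2}]$, edges $E_{i+1/2,j}=\{x_{i+1/2}\}\times[y_{j-1/2},y_{j+1/2}]$, $E_{i,j+1/2}=[x_{i-1/2},x_{i+1/2}]\times\{y_{j+1/2}\}$. $\Omega^h=\{(x_i,y_j):C_{ij}\cap\Omega\ne\emptyset\}$. Heaviside: $H_{i+1/2,j}=\mathrm{length}(E_{i+1/2,j}\cap\Omega)/h$, $H_{i,j+1/2}=\mathrm{length}(E_{i,j+1/2}\cap\Omega)/h$. $(\operatorname{G}_xp)_{i+1/2,j}=(p_{i+1,j}-p_{ij})/h$, $(\operatorname{G}_yp)_{i,j+1/2}=(p_{i,j+1}-p_{ij})/h$, $\operatorname{G}p=(\operatorname{G}_xp,\operatorname{G}_yp)$; $(\operatorname{D}(u,v))_{ij}=(u_{i+1/2,j}-u_{i-1/2,j})/h+(v_{i,j+1/2}-v_{i,j-1/2})/h$; $(\operatorname{G}H)_{ij}=((H_{i+1/2,j}-H_{i-1/2,j})/h,(H_{i,j+1/2}-H_{i,j-1/2})/h)$. $\vec J^h_{ij}=(\tilde{\vec x}_{ij}-\vec c)\times(\operatorname{G}H)_{ij}$ (planar cross product $a_1b_2-a_2b_1$), $\vec c\in\mathbb{R}^2$ fixed, $\tilde{\vec x}_{ij}=\frac12(\vec x+\vec y)$ if $\partial C_{ij}\cap\partial\Omega=\{\vec x,\vec y\}$ and $0$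 if $\partial C_{ij}\cap\partial\Omega=\emptyset$. Constants $\rho,m>0$, inertia $\mathbb{I}>0$ (scalar). $(L^hp)_{ij}=-(\operatorname{D}(\frac H\rho\operatorname{G}p))_{ij}+(\operatorname{G}H)_{ij}\cdot\frac1m\sum_{k,l}p_{kl}(\operatorname{G}H)_{kl}h^2+\vec J^h_{ij}\mathbb{I}^{-1}\sum_{k,l}p_{kl}\vec J^h_{kl}h^2$ for $p:\Omega^h\to\mathbb{R}$, sums over $\Omega^h$. $\{1_{\Omega^h}\}^\perp=\{p:\sum_{\Omega^h}p=0\}$. *)

theory Defs
  imports "HOL-Analysis.Analysis"
begin

text \<open>Grid cells and edges are indexed by
  integer pairs: cell (i,j) is C_ij; the x-edge (i,j) stands for E_{i+1/2,j} and the
  y-edge (i,j) stands for E_{i,j+1/2}. Edge fields Ux, Uy :: int*int => real are indexed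
  accordingly: Ux (i,j) = (U_x)_{i+1/2,j}, Uy (i,j) = (U_y)_{i,j+1/2}.\<close>

definition cell :: "real \<Rightarrow> int \<Rightarrow> int \<Rightarrow> (real \<times> real) set" where
  "cell h i j = {(real_of_int i - 1/2) * h .. (real_of_int i + 1/2) * h}
              \<times> {(real_of_int j - 1/2) * h .. (real_of_int j + 1/2) * h}"

definition Omega_h :: "(real \<times> real) set \<Rightarrow> real \<Rightarrow> (int \<times> int) set" where
  "Omega_h \<Omega> h = {(i, j). cell h i j \<inter> \<Omega> \<noteq> {}}"

text \<open>Finite index sets of edges that carry the whole sum over all edges
  (every edge not listed here is disjoint from Omega, so its Heaviside value is 0).\<close>
definition edges_x :: "(real \<times> real) set \<Rightarrow> real \<Rightarrow> (int \<times> int) set" where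
  "edges_x \<Omega> h = {(i, j). (i, j) \<in> Omega_h \<Omega> h \<or> (i + 1, j) \<in> Omega_h \<Omega> h}"

definition edges_y :: "(real \<times> real) set \<Rightarrow> real \<Rightarrow> (int \<times> int) set" where
  "edges_y \<Omega> h = {(i, j). (i, j) \<in> Omega_h \<Omega> h \<or> (i, j + 1) \<in> Omega_h \<Omega> h}"

definition Hx :: "(real \<times> real) set \<Rightarrow> real \<Rightarrow> int \<times> int \<Rightarrow> real" where
  "Hx \<Omega> h = (\<lambda>(i, j). measure lborel
      {t \<in> {(real_of_int j - 1/2) * h .. (real_of_int j + 1/2) * h}.
         ((real_of_int i + 1/2) * h, t) \<in> \<Omega>} / h)"

definition Hy :: "(real \<times> real) set \<Rightarrow> real \<Rightarrow> int \<times> int \<Rightarrow> real" where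
  "Hy \<Omega> h = (\<lambda>(i, j). measure lborel
      {s \<in> {(real_of_int i - 1/2) * h .. (real_of_int i + 1/2) * h}.
         (s, (real_of_int j + 1/2) * h) \<in> \<Omega>} / h)"

definition Gx :: "real \<Rightarrow> (int \<times> int \<Rightarrow> real) \<Rightarrow> int \<times> int \<Rightarrow> real" where
  "Gx h p = (\<lambda>(i, j). (p (i + 1, j) - p (i, j)) / h)"

definition Gy :: "real \<Rightarrow> (int \<times> int \<Rightarrow> real) \<Rightarrow> int \<times> int \<Rightarrow> real" where
  "Gy h p = (\<lambda>(i, j). (p (i, j + 1) - p (i, j)) / h)"

definition Dh :: "real \<Rightarrow> (int \<times> int \<Rightarrow> real) \<Rightarrow> (int \<times> int \<Rightarrow> real) \<Rightarrow> int \<times> int \<Rightarrow> real" where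
  "Dh h u v = (\<lambda>(i, j). (u (i, j) - u (i - 1, j)) / h + (v (i, j) - v (i, j - 1)) / h)"

definition GH :: "(real \<times> real) set \<Rightarrow> real \<Rightarrow> int \<times> int \<Rightarrow> real \<times> real" where
  "GH \<Omega> h = (\<lambda>(i, j). ((Hx \<Omega> h (i, j) - Hx \<Omega> h (i - 1, j)) / h,
                        (Hy \<Omega> h (i, j) - Hy \<Omega> h (i, j - 1)) / h))"

definition cross2 :: "real \<times> real \<Rightarrow> real \<times> real \<Rightarrow> real" where
  "cross2 a b = fst a * snd b - snd a * fst b"

definition dot2 :: "real \<times> real \<Rightarrow> real \<times> real \<Rightarrow> real" where
  "dot2 a b = fst a * fst b + snd a * snd b"

definition xtilde :: "(real \<times> real) set \<Rightarrow> real \<Rightarrow> int \<times> int \<Rightarrow> real \<times> real" where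
  "xtilde \<Omega> h = (\<lambda>(i, j).
     if \<exists>a b. frontier (cell h i j) \<inter> frontier \<Omega> = {a, b}
     then (SOME z. \<exists>a b. frontier (cell h i j) \<inter> frontier \<Omega> = {a, b} \<and> z = (1/2) *\<^sub>R (a + b))
     else 0)"

definition Jh :: "(real \<times> real) set \<Rightarrow> real \<Rightarrow> real \<times> real \<Rightarrow> int \<times> int \<Rightarrow> real" where
  "Jh \<Omega> h c = (\<lambda>ij. cross2 (xtilde \<Omega> h ij - c) (GH \<Omega> h ij))"

definition Lh :: "(real \<times> real) set \<Rightarrow> real \<Rightarrow> real \<times> real \<Rightarrow> real \<Rightarrow> real \<Rightarrow> real
                  \<Rightarrow> (int \<times> int \<Rightarrow> real) \<Rightarrow> int \<times> int \<Rightarrow> real" where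
  "Lh \<Omega> h c \<rho> m II p = (\<lambda>ij.
      - Dh h (\<lambda>e. Hx \<Omega> h e / \<rho> * Gx h p e) (\<lambda>e. Hy \<Omega> h e / \<rho> * Gy h p e) ij
      + dot2 (GH \<Omega> h ij) ((1 / m) *\<^sub>R (\<Sum>kl\<in>Omega_h \<Omega> h. (p kl * h^2) *\<^sub>R GH \<Omega> h kl))
      + Jh \<Omega> h c ij * (1 / II) * (\<Sum>kl\<in>Omega_h \<Omega> h. p kl * Jh \<Omega> h c kl * h^2))"

definition Eh :: "(real \<times> real) set \<Rightarrow> real \<Rightarrow> real \<Rightarrow> real \<Rightarrow> real
                  \<Rightarrow> (int \<times> int \<Rightarrow> real) \<Rightarrow> (int \<times> int \<Rightarrow> real) \<Rightarrow> real \<times> real \<Rightarrow> real \<Rightarrow> real" where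
  "Eh \<Omega> h \<rho> m II Ux Uy v \<omega> =
      1/2 * ((\<Sum>e\<in>edges_x \<Omega> h. \<rho> * Hx \<Omega> h e * (Ux e)^2 * h^2)
           + (\<Sum>e\<in>edges_y \<Omega> h. \<rho> * Hy \<Omega> h e * (Uy e)^2 * h^2))
      + 1/2 * m * (norm v)^2 + 1/2 * \<omega> * II * \<omega>"

end

theory Submission
  imports Defs
begin

text \<open>Test the pressure equation against p itself. Summation by parts, which produces no
  boundary terms because the Heaviside weights vanish on every edge leaving the cells of
  \<open>\<Omega>\<^sup>h\<close>, turns both divergence terms into the H-weighted inner product of edge fields
  (\<open>edge_inner\<close>), giving
  \<open>\<langle>G p, G p\<rangle>/\<rho> + |a|\<^sup>2/m + b\<^sup>2/\<II> = \<langle>U\<^sup>*, G p\<rangle> + a\<cdot>v\<^sup>* + b \<omega>\<^sup>*\<close>,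
  where a and b are the translational and rotational impulses of p. Expanding the energy of
  the corrected triple, the energy loss is exactly half of the left-hand side, a sum of
  squares.\<close>

definition edge_inner :: "(real \<times> real) set \<Rightarrow> real \<Rightarrow> (int \<times> int \<Rightarrow> real) \<Rightarrow> (int \<times> int \<Rightarrow> real)
                          \<Rightarrow> (int \<times> int \<Rightarrow> real) \<Rightarrow> (int \<times> int \<Rightarrow> real) \<Rightarrow> real" where
  "edge_inner \<Omega> h Ux Uy Vx Vy =
      (\<Sum>e\<in>edges_x \<Omega> h. Hx \<Omega> h e * Ux e * Vx e * h^2)
    + (\<Sum>e\<in>edges_y \<Omega> h. Hy \<Omega> h e * Uy e * Vy e * h^2)"

lemma finite_Omega_h:
  assumes "bounded \<Omega>" and "h > 0"
  shows "finite (Omega_h \<Omega> h)"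
proof -
  obtain r where r: "\<And>z. z \<in> \<Omega> \<Longrightarrow> norm z \<le> r"
    using assms(1) by (auto simp: bounded_iff)
  define N where "N = \<lceil>r / h\<rceil> + 1"
  have index_bound: "\<bar>k\<bar> \<le> N" if "(real_of_int k - 1/2) * h \<le> x" "x \<le> (real_of_int k + 1/2) * h"
    "\<bar>x\<bar> \<le> r" for k :: int and x :: real
  proof -
    have "\<bar>real_of_int k * h\<bar> \<le> r + h / 2"
      using that by (auto simp: abs_le_iff algebra_simps)
    hence "\<bar>real_of_int k\<bar> * h \<le> r + h / 2"
      using assms(2) by (simp add: abs_mult)
    hence "\<bar>real_of_int k\<bar> \<le> r / h + 1/2"
      using assms(2) by (simp add: field_simps)
    also have "\<dots> \<le> real_of_int N" unfolding N_def by linarith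
    finally show ?thesis by linarith
  qed
  have "Omega_h \<Omega> h \<subseteq> {-N..N} \<times> {-N..N}"
  proof clarify
    fix i j assume "(i, j) \<in> Omega_h \<Omega> h"
    then obtain x y where xy: "(x, y) \<in> cell h i j" "(x, y) \<in> \<Omega>"
      by (auto simp: Omega_h_def)
    have "\<bar>x\<bar> \<le> r" "\<bar>y\<bar> \<le> r"
      using r[OF xy(2)] norm_fst_le[of x y] norm_snd_le[of y x] by auto
    thus "i \<in> {-N..N} \<and> j \<in> {-N..N}"
      using xy(1) index_bound by (fastforce simp: cell_def abs_le_iff)
  qed
  thus ?thesis by (rule finite_subset) simp
qed

lemma sum_mult_diff_shift:
  fixes u p :: "'a \<Rightarrow> real"
  assumes fg: "\<And>e. f (g e) = e" and gf: "\<And>e. g (f e) = e" and "finite S"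
    and u_vanish: "\<And>e. e \<notin> S \<or> f e \<notin> S \<Longrightarrow> u e = 0"
  shows "(\<Sum>e\<in>S. p e * (u e - u (g e))) = - (\<Sum>e\<in>{e. e \<in> S \<or> f e \<in> S}. u e * (p (f e) - p e))"
proof -
  let ?E = "{e. e \<in> S \<or> f e \<in> S}"
  have "?E \<subseteq> S \<union> g ` S" using gf by (auto intro: rev_image_eqI)
  hence "finite ?E" using \<open>finite S\<close> by (auto intro: finite_subset)
  have unshifted: "(\<Sum>e\<in>S. p e * u e) = (\<Sum>e\<in>?E. p e * u e)"
    by (rule sum.mono_neutral_left) (use \<open>finite ?E\<close> u_vanish in auto)
  have "inj g" by (metis fg injI)
  have "(\<Sum>e\<in>S. p e * u (g e)) = (\<Sum>e\<in>g ` S. p (f e) * u e)"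
    using \<open>inj g\<close> by (simp add: sum.reindex inj_on_def fg)
  also have "\<dots> = (\<Sum>e\<in>?E. p (f e) * u e)"
  proof (rule sum.mono_neutral_left[OF \<open>finite ?E\<close>])
    show "g ` S \<subseteq> ?E" using fg by auto
    have "f e \<notin> S" if "e \<notin> g ` S" for e
      using that gf by (metis image_eqI)
    thus "\<forall>e\<in>?E - g ` S. p (f e) * u e = 0" using u_vanish by auto
  qed
  finally have shifted: "(\<Sum>e\<in>S. p e * u (g e)) = (\<Sum>e\<in>?E. p (f e) * u e)" .
  show ?thesis
    by (simp add: right_diff_distrib sum_subtractf unshifted shifted algebra_simps)
qed

lemma Hx_eq_0_outside:
  assumes "h > 0" and "(i, j) \<notin> Omega_h \<Omega> h \<or> (i + 1, j) \<notin> Omega_h \<Omega> h"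
  shows "Hx \<Omega> h (i, j) = 0"
proof -
  have no_point: "{t \<in> {(real_of_int j - 1/2) * h .. (real_of_int j + 1/2) * h}.
         ((real_of_int i + 1/2) * h, t) \<in> \<Omega>} = {}"
  proof (rule ccontr)
    assume "\<not> ?thesis"
    then obtain t where t: "t \<in> {(real_of_int j - 1/2) * h .. (real_of_int j + 1/2) * h}"
      "((real_of_int i + 1/2) * h, t) \<in> \<Omega>" by auto
    have "((real_of_int i + 1/2) * h, t) \<in> cell h i j \<inter> cell h (i + 1) j"
      using t(1) assms(1) by (auto simp: cell_def algebra_simps)
    thus False using assms(2) t(2) by (auto simp: Omega_h_def)
  qed
  show ?thesis unfolding Hx_def case_prod_conv no_point by simp
qed

lemma Hy_eq_0_outside:
  assumes "h > 0" and "(i, j) \<notin> Omega_h \<Omega> h \<or> (i, j + 1) \<notin> Omega_h \<Omega> h"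
  shows "Hy \<Omega> h (i, j) = 0"
proof -
  have no_point: "{s \<in> {(real_of_int i - 1/2) * h .. (real_of_int i + 1/2) * h}.
         (s, (real_of_int j + 1/2) * h) \<in> \<Omega>} = {}"
  proof (rule ccontr)
    assume "\<not> ?thesis"
    then obtain s where s: "s \<in> {(real_of_int i - 1/2) * h .. (real_of_int i + 1/2) * h}"
      "(s, (real_of_int j + 1/2) * h) \<in> \<Omega>" by auto
    have "(s, (real_of_int j + 1/2) * h) \<in> cell h i j \<inter> cell h i (j + 1)"
      using s(1) assms(1) by (auto simp: cell_def algebra_simps)
    thus False using assms(2) s(2) by (auto simp: Omega_h_def)
  qed
  show ?thesis unfolding Hy_def case_prod_conv no_point by simp
qed

lemma Hx_nonneg: "h > 0 \<Longrightarrow> Hx \<Omega> h e \<ge> 0"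
  by (cases e) (simp add: Hx_def)

lemma Hy_nonneg: "h > 0 \<Longrightarrow> Hy \<Omega> h e \<ge> 0"
  by (cases e) (simp add: Hy_def)

lemma sum_mult_Dh_Heaviside:
  assumes "h > 0" and fin: "finite (Omega_h \<Omega> h)"
  shows "(\<Sum>ij\<in>Omega_h \<Omega> h. p ij * Dh h (\<lambda>e. Hx \<Omega> h e * Ux e) (\<lambda>e. Hy \<Omega> h e * Uy e) ij * h^2)
         = - edge_inner \<Omega> h Ux Uy (Gx h p) (Gy h p)"
proof -
  let ?S = "Omega_h \<Omega> h"
  let ?ux = "\<lambda>e. Hx \<Omega> h e * Ux e" and ?uy = "\<lambda>e. Hy \<Omega> h e * Uy e"
  have edges_x_eq: "edges_x \<Omega> h = {e. e \<in> ?S \<or> (\<lambda>(i, j). (i + 1, j)) e \<in> ?S}"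
    by (auto simp: edges_x_def)
  have edges_y_eq: "edges_y \<Omega> h = {e. e \<in> ?S \<or> (\<lambda>(i, j). (i, j + 1)) e \<in> ?S}"
    by (auto simp: edges_y_def)
  have x_parts: "(\<Sum>e\<in>?S. p e * (?ux e - ?ux ((\<lambda>(i, j). (i - 1, j)) e)))
      = - (\<Sum>e\<in>edges_x \<Omega> h. ?ux e * (p ((\<lambda>(i, j). (i + 1, j)) e) - p e))"
    unfolding edges_x_eq
    by (rule sum_mult_diff_shift) (use fin Hx_eq_0_outside[OF \<open>h > 0\<close>] in auto)
  have y_parts: "(\<Sum>e\<in>?S. p e * (?uy e - ?uy ((\<lambda>(i, j). (i, j - 1)) e)))
      = - (\<Sum>e\<in>edges_y \<Omega> h. ?uy e * (p ((\<lambda>(i, j). (i, j + 1)) e) - p e))"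
    unfolding edges_y_eq
    by (rule sum_mult_diff_shift) (use fin Hy_eq_0_outside[OF \<open>h > 0\<close>] in auto)
  have "(\<Sum>ij\<in>?S. p ij * Dh h ?ux ?uy ij * h^2)
      = h * (\<Sum>e\<in>?S. p e * (?ux e - ?ux ((\<lambda>(i, j). (i - 1, j)) e)))
      + h * (\<Sum>e\<in>?S. p e * (?uy e - ?uy ((\<lambda>(i, j). (i, j - 1)) e)))"
    using \<open>h > 0\<close>
    by (auto simp: Dh_def field_simps power2_eq_square sum_distrib_left sum.distrib[symmetric]
        intro!: sum.cong)
  also have "\<dots> = - edge_inner \<Omega> h Ux Uy (Gx h p) (Gy h p)"
    unfolding x_parts y_parts edge_inner_def using \<open>h > 0\<close>
    by (auto simp: Gx_def Gy_def field_simps power2_eq_square sum_distrib_left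
        sum_negf[symmetric] intro!: sum.cong arg_cong2[where f = "(+)"])
  finally show ?thesis .
qed

lemma dot2_sum_left: "dot2 (\<Sum>x\<in>A. f x) w = (\<Sum>x\<in>A. dot2 (f x) w)"
  by (simp add: dot2_def fst_sum snd_sum sum_distrib_right sum.distrib)

lemma sum_mult_Lh:
  fixes p :: "int \<times> int \<Rightarrow> real" and \<Omega> :: "(real \<times> real) set" and h :: real and c :: "real \<times> real"
  assumes "h > 0" and "finite (Omega_h \<Omega> h)"
  defines "a \<equiv> \<Sum>kl\<in>Omega_h \<Omega> h. (p kl * h^2) *\<^sub>R GH \<Omega> h kl"
    and "b \<equiv> \<Sum>kl\<in>Omega_h \<Omega> h. p kl * Jh \<Omega> h c kl * h^2"
  shows "(\<Sum>ij\<in>Omega_h \<Omega> h. p ij * Lh \<Omega> h c \<rho> m II p ij * h^2)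
       = edge_inner \<Omega> h (Gx h p) (Gy h p) (Gx h p) (Gy h p) / \<rho> + dot2 a a / m + b * b / II"
proof -
  let ?S = "Omega_h \<Omega> h"
  have scale_x: "(\<lambda>e. Hx \<Omega> h e / \<rho> * Gx h p e) = (\<lambda>e. Hx \<Omega> h e * (Gx h p e / \<rho>))"
    and scale_y: "(\<lambda>e. Hy \<Omega> h e / \<rho> * Gy h p e) = (\<lambda>e. Hy \<Omega> h e * (Gy h p e / \<rho>))"
    by auto
  have "(\<Sum>ij\<in>?S. p ij * Dh h (\<lambda>e. Hx \<Omega> h e / \<rho> * Gx h p e) (\<lambda>e. Hy \<Omega> h e / \<rho> * Gy h p e) ij * h^2)
      = - edge_inner \<Omega> h (\<lambda>e. Gx h p e / \<rho>) (\<lambda>e. Gy h p e / \<rho>) (Gx h p) (Gy h p)"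
    unfolding scale_x scale_y by (rule sum_mult_Dh_Heaviside[OF assms(1,2)])
  also have "\<dots> = - edge_inner \<Omega> h (Gx h p) (Gy h p) (Gx h p) (Gy h p) / \<rho>"
    by (simp add: edge_inner_def sum_divide_distrib diff_divide_distrib)
  finally have green: "(\<Sum>ij\<in>?S. p ij * Dh h (\<lambda>e. Hx \<Omega> h e / \<rho> * Gx h p e) (\<lambda>e. Hy \<Omega> h e / \<rho> * Gy h p e) ij * h^2)
      = - edge_inner \<Omega> h (Gx h p) (Gy h p) (Gx h p) (Gy h p) / \<rho>" .
  have "(\<Sum>ij\<in>?S. p ij * Lh \<Omega> h c \<rho> m II p ij * h^2)
      = (\<Sum>ij\<in>?S. - (p ij * Dh h (\<lambda>e. Hx \<Omega> h e / \<rho> * Gx h p e) (\<lambda>e. Hy \<Omega> h e / \<rho> * Gy h p e) ij * h^2)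
          + dot2 ((p ij * h^2) *\<^sub>R GH \<Omega> h ij) a / m + p ij * Jh \<Omega> h c ij * h^2 * b / II)"
    unfolding Lh_def a_def[symmetric] b_def[symmetric]
    by (rule sum.cong) (simp_all add: dot2_def algebra_simps add_divide_distrib)
  also have "\<dots> = - (\<Sum>ij\<in>?S. p ij * Dh h (\<lambda>e. Hx \<Omega> h e / \<rho> * Gx h p e) (\<lambda>e. Hy \<Omega> h e / \<rho> * Gy h p e) ij * h^2)
      + (\<Sum>ij\<in>?S. dot2 ((p ij * h^2) *\<^sub>R GH \<Omega> h ij) a) / m
      + (\<Sum>ij\<in>?S. p ij * Jh \<Omega> h c ij * h^2) * b / II"
    by (simp only: sum.distrib sum_negf sum_divide_distrib sum_distrib_right)
  also have "\<dots> = edge_inner \<Omega> h (Gx h p) (Gy h p) (Gx h p) (Gy h p) / \<rho> + dot2 a a / m + b * b / II"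
    unfolding green dot2_sum_left[symmetric] a_def[symmetric] b_def[symmetric] by simp
  finally show ?thesis .
qed

lemma sum_mult_pressure_source:
  fixes p :: "int \<times> int \<Rightarrow> real" and \<Omega> :: "(real \<times> real) set" and h :: real and c :: "real \<times> real"
  assumes "h > 0" and "finite (Omega_h \<Omega> h)"
  defines "a \<equiv> \<Sum>kl\<in>Omega_h \<Omega> h. (p kl * h^2) *\<^sub>R GH \<Omega> h kl"
    and "b \<equiv> \<Sum>kl\<in>Omega_h \<Omega> h. p kl * Jh \<Omega> h c kl * h^2"
  shows "(\<Sum>ij\<in>Omega_h \<Omega> h. p ij * (- Dh h (\<lambda>e. Hx \<Omega> h e * Ux e) (\<lambda>e. Hy \<Omega> h e * Uy e) ij
            + dot2 v (GH \<Omega> h ij) + \<omega> * Jh \<Omega> h c ij) * h^2)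
       = edge_inner \<Omega> h Ux Uy (Gx h p) (Gy h p) + dot2 a v + \<omega> * b"
proof -
  let ?S = "Omega_h \<Omega> h"
  have "(\<Sum>ij\<in>?S. p ij * (- Dh h (\<lambda>e. Hx \<Omega> h e * Ux e) (\<lambda>e. Hy \<Omega> h e * Uy e) ij
            + dot2 v (GH \<Omega> h ij) + \<omega> * Jh \<Omega> h c ij) * h^2)
      = - (\<Sum>ij\<in>?S. p ij * Dh h (\<lambda>e. Hx \<Omega> h e * Ux e) (\<lambda>e. Hy \<Omega> h e * Uy e) ij * h^2)
        + (\<Sum>ij\<in>?S. dot2 ((p ij * h^2) *\<^sub>R GH \<Omega> h ij) v)
        + \<omega> * (\<Sum>ij\<in>?S. p ij * Jh \<Omega> h c ij * h^2)"
    unfolding sum_distrib_left sum_negf[symmetric] sum.distrib[symmetric]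
    by (rule sum.cong) (simp_all add: dot2_def algebra_simps)
  also have "\<dots> = edge_inner \<Omega> h Ux Uy (Gx h p) (Gy h p) + dot2 a v + \<omega> * b"
    unfolding sum_mult_Dh_Heaviside[OF assms(1,2)] dot2_sum_left[symmetric]
      a_def[symmetric] b_def[symmetric] by simp
  finally show ?thesis .
qed

lemma edge_inner_self_nonneg:
  assumes "h > 0"
  shows "edge_inner \<Omega> h Ux Uy Ux Uy \<ge> 0"
proof -
  have weighted_square_nonneg: "0 \<le> w * u * u * h^2" if "0 \<le> w" for w u :: real
  proof -
    have "w * u * u * h^2 = w * (u * h)^2" by (simp add: power2_eq_square)
    thus ?thesis using that by (metis mult_nonneg_nonneg zero_le_power2)
  qed
  show ?thesis
    unfolding edge_inner_def
    by (intro add_nonneg_nonneg sum_nonneg weighted_square_nonneg Hx_nonneg Hy_nonneg assms)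
qed

lemma sum_weighted_square_shift:
  fixes w U g :: "'a \<Rightarrow> real"
  assumes "\<rho> \<noteq> 0"
  shows "(\<Sum>e\<in>E. \<rho> * w e * (U e - g e / \<rho>)^2 * h^2)
       = (\<Sum>e\<in>E. \<rho> * w e * (U e)^2 * h^2) - 2 * (\<Sum>e\<in>E. w e * U e * g e * h^2)
         + (\<Sum>e\<in>E. w e * g e * g e * h^2) / \<rho>"
proof -
  have "(\<Sum>e\<in>E. \<rho> * w e * (U e - g e / \<rho>)^2 * h^2)
      = (\<Sum>e\<in>E. \<rho> * w e * (U e)^2 * h^2 - 2 * (w e * U e * g e * h^2) + w e * g e * g e * h^2 / \<rho>)"
    using assms by (intro sum.cong) (auto simp: field_simps power2_eq_square)
  thus ?thesis
    by (simp add: sum.distrib sum_subtractf sum_distrib_left sum_divide_distrib)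
qed

lemma Eh_minus_Eh_correction:
  assumes "\<rho> \<noteq> 0" and "m \<noteq> 0" and "II \<noteq> 0"
  shows "Eh \<Omega> h \<rho> m II Ux Uy v \<omega>
         - Eh \<Omega> h \<rho> m II (\<lambda>e. Ux e - gx e / \<rho>) (\<lambda>e. Uy e - gy e / \<rho>)
             (v - (1 / m) *\<^sub>R a) (\<omega> - (1 / II) * b)
       = edge_inner \<Omega> h Ux Uy gx gy + dot2 a v + \<omega> * b
         - (edge_inner \<Omega> h gx gy gx gy / \<rho> + dot2 a a / m + b * b / II) / 2"
proof -
  have norm_sq: "(norm z)^2 = dot2 z z" for z :: "real \<times> real"
    by (simp add: norm_prod_def dot2_def power2_eq_square)
  show ?thesis
    unfolding Eh_def edge_inner_def norm_sq sum_weighted_square_shift[OF assms(1)]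
    using assms by (simp add: dot2_def field_simps)
qed

theorem theorem4p9:
  fixes \<Omega> :: "(real \<times> real) set" and h \<rho> m II :: real and c :: "real \<times> real"
    and Ux_s Uy_s :: "int \<times> int \<Rightarrow> real" and v_s :: "real \<times> real" and \<omega>_s :: real
    and p :: "int \<times> int \<Rightarrow> real"
  assumes "open \<Omega>" and "connected \<Omega>" and "bounded \<Omega>" and "\<Omega> \<noteq> {}"
    and "h > 0" and "\<rho> > 0" and "m > 0" and "II > 0"
    and "(\<Sum>ij\<in>Omega_h \<Omega> h. p ij) = 0"
    and "\<forall>ij\<in>Omega_h \<Omega> h. Lh \<Omega> h c \<rho> m II p ij =
           - Dh h (\<lambda>e. Hx \<Omega> h e * Ux_s e) (\<lambda>e. Hy \<Omega> h e * Uy_s e) ij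
           + dot2 v_s (GH \<Omega> h ij) + \<omega>_s * Jh \<Omega> h c ij"
  shows "Eh \<Omega> h \<rho> m II Ux_s Uy_s v_s \<omega>_s \<ge>
         Eh \<Omega> h \<rho> m II
           (\<lambda>e. Ux_s e - Gx h p e / \<rho>)
           (\<lambda>e. Uy_s e - Gy h p e / \<rho>)
           (v_s - (1 / m) *\<^sub>R (\<Sum>kl\<in>Omega_h \<Omega> h. (p kl * h^2) *\<^sub>R GH \<Omega> h kl))
           (\<omega>_s - (1 / II) * (\<Sum>kl\<in>Omega_h \<Omega> h. p kl * Jh \<Omega> h c kl * h^2))"
proof -
  define a where "a = (\<Sum>kl\<in>Omega_h \<Omega> h. (p kl * h^2) *\<^sub>R GH \<Omega> h kl)"
  define b where "b = (\<Sum>kl\<in>Omega_h \<Omega> h. p kl * Jh \<Omega> h c kl * h^2)"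
  define Q where "Q = edge_inner \<Omega> h (Gx h p) (Gy h p) (Gx h p) (Gy h p) / \<rho> + dot2 a a / m + b * b / II"
  have nonzero: "\<rho> \<noteq> 0" "m \<noteq> 0" "II \<noteq> 0" using assms(6-8) by simp_all
  have fin: "finite (Omega_h \<Omega> h)" using finite_Omega_h \<open>bounded \<Omega>\<close> \<open>h > 0\<close> by blast
  have balance: "edge_inner \<Omega> h Ux_s Uy_s (Gx h p) (Gy h p) + dot2 a v_s + \<omega>_s * b = Q"
    unfolding Q_def a_def b_def
      sum_mult_Lh[OF \<open>h > 0\<close> fin, symmetric] sum_mult_pressure_source[OF \<open>h > 0\<close> fin, symmetric]
    using assms(10) by (intro sum.cong) auto
  have "Eh \<Omega> h \<rho> m II Ux_s Uy_s v_s \<omega>_s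
         - Eh \<Omega> h \<rho> m II (\<lambda>e. Ux_s e - Gx h p e / \<rho>) (\<lambda>e. Uy_s e - Gy h p e / \<rho>)
             (v_s - (1 / m) *\<^sub>R a) (\<omega>_s - (1 / II) * b) = Q / 2"
    using Eh_minus_Eh_correction[OF nonzero, of \<Omega> h Ux_s Uy_s v_s \<omega>_s "Gx h p" "Gy h p" a b,
        folded Q_def] balance
    by linarith
  moreover have "Q \<ge> 0"
    unfolding Q_def dot2_def using edge_inner_self_nonneg[OF \<open>h > 0\<close>] assms(6-8)
    by (intro add_nonneg_nonneg divide_nonneg_pos) simp_all
  ultimately show ?thesis unfolding a_def[symmetric] b_def[symmetric] by linarith
qed

end
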